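(* For every fixed priority order on the agents, the algorithm MaxMatch is a pseudomonotone $2$-rank-approximation algorithm for matching markets, and it is fully lex-truthfully implementable. MaxMatch: start with the empty matching $M$. For $r=1,2,\dots,m$: for every item $i$ not matched in $M$ such that some agent not matched in $M$ has $i$ among its top $r$ items, match $i$ to the highest-priority agent that is not matched in $M$ and has $i$ among its top $r$ items (updating $M$). Output $M$ after stage $m$.
   Context: Matching market: $n$ agents and $m$ items; each agent $j$ reports any strict total order $\succ_j$ on the items. An outcome is a matching of agents to items (each agent gets at most one item, each item at most one agent); an agent not matched gets the null item $\emptyset$, ranked below all items. Agents compare outcomes only through the item they receive. For a matching $M$ and profile $\succ$, $\mathrm{rank}_i(M;\succ)$ is the number of agents assigned one of their top-$i$ items, and $\mathrm{maxrank}_i(\succ)$ is its maximum over all matchings. A (possibly randomized) algorithm is an $\alpha$-rank-approximation algorithm if for every $\succ$ and every $i\in[m]$, $\mathbb{E}[\mathrm{rank}_i(\text{output};\succ)]\ge\mathrm{maxrank}_i(\succ)/\alpha$. A deterministic algorithm $f$ is pseudomonotone if for every agent $j$, every $\succ_{-j}$ and all $\succ_j,\succ'_j$, letting $a$ and $a'$ be the items (possibly $\emptyset$) assigned to $j$ by $f(\succ_j,\succ_{-j})$ and $f(\succ'_j,\succ_{-j})$: either $a\succeq_j a'$ (i.e. $a=a'$ or $a\succ_j a'$), or there is an item $b$ with $b\succ_j a'$ and the position of $b$ in $\succ_j$ is strictly smaller than its position in $\succ'_j$. For a randomized mechanism, each agent $j$ gets a distribution over items $\cup\{\emptyset\}$;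 a distribution $p$ lex-dominates $q\ne p$ w.r.t. $\succ_j$ if at the first element (in the order $\succ_j$, with $\emptyset$ last) where they differ, $p$ is larger. A randomized mechanism is lex-truthful if for all $j,\succ_j,\succ'_j,\succ_{-j}$, $j$'s item distribution under $(\succ_j,\succ_{-j})$ either equals or lex-dominates w.r.t. $\succ_j$ its item distribution under $(\succ'_j,\succ_{-j})$. A deterministic algorithm $f$ is fully lex-truthfully implementable if for every $\varepsilon>0$ there is a lex-truthful randomized mechanism $\mathcal{M}^\varepsilon$ with $\Pr[\mathcal{M}^\varepsilon(\succ)=f(\succ)]\ge1-\varepsilon$ for all profiles $\succ$. *)

theory Defs
  imports "HOL-Probability.Probability"
begin

text \<open>Agents are 0..<n, items are 0..<m. A preference of an agent is a list enumerating
  all items, best first. A matching is a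
  partial map from agents to items (None = null item).\<close>

type_synonym pref = "nat list"
type_synonym profile = "nat \<Rightarrow> pref"
type_synonym matching = "nat \<Rightarrow> nat option"

definition valid_pref :: "nat \<Rightarrow> pref \<Rightarrow> bool" where
  "valid_pref m p \<longleftrightarrow> distinct p \<and> set p = {0..<m}"

definition valid_profile :: "nat \<Rightarrow> nat \<Rightarrow> profile \<Rightarrow> bool" where
  "valid_profile n m P \<longleftrightarrow> (\<forall>j<n. valid_pref m (P j))"

definition is_matching :: "nat \<Rightarrow> nat \<Rightarrow> matching \<Rightarrow> bool" where
  "is_matching n m M \<longleftrightarrow> (\<forall>j. M j \<noteq> None \<longrightarrow> j < n) \<and> (\<forall>j a. M j = Some a \<longrightarrow> a < m)
     \<and> inj_on M (dom M)"

definition pos :: "pref \<Rightarrow> nat \<Rightarrow> nat" where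
  "pos p b = (LEAST k. k < length p \<and> p ! k = b)"

fun better :: "pref \<Rightarrow> nat option \<Rightarrow> nat option \<Rightarrow> bool" where
  "better p (Some a) None = True"
| "better p (Some a) (Some b) = (pos p a < pos p b)"
| "better p None _ = False"

definition weakly_better :: "pref \<Rightarrow> nat option \<Rightarrow> nat option \<Rightarrow> bool" where
  "weakly_better p x y \<longleftrightarrow> x = y \<or> better p x y"

definition rank :: "nat \<Rightarrow> nat \<Rightarrow> matching \<Rightarrow> profile \<Rightarrow> nat" where
  "rank n i M P = card {j. j < n \<and> (\<exists>a. M j = Some a \<and> a \<in> set (take i (P j)))}"

definition maxrank :: "nat \<Rightarrow> nat \<Rightarrow> nat \<Rightarrow> profile \<Rightarrow> nat" where
  "maxrank n m i P = Max {rank n i M P | M. is_matching n m M}"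

definition is_mechanism :: "nat \<Rightarrow> nat \<Rightarrow> (profile \<Rightarrow> matching pmf) \<Rightarrow> bool" where
  "is_mechanism n m Mech \<longleftrightarrow>
     (\<forall>P. valid_profile n m P \<longrightarrow> set_pmf (Mech P) \<subseteq> {M. is_matching n m M})"

definition rank_approx :: "nat \<Rightarrow> nat \<Rightarrow> real \<Rightarrow> (profile \<Rightarrow> matching pmf) \<Rightarrow> bool" where
  "rank_approx n m \<alpha> Mech \<longleftrightarrow>
     is_mechanism n m Mech \<and>
     (\<forall>P. valid_profile n m P \<longrightarrow> (\<forall>i\<in>{1..m}.
        measure_pmf.expectation (Mech P) (\<lambda>M. real (rank n i M P)) \<ge> real (maxrank n m i P) / \<alpha>))"

definition pseudomonotone :: "nat \<Rightarrow> nat \<Rightarrow> (profile \<Rightarrow> matching) \<Rightarrow> bool" where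
  "pseudomonotone n m f \<longleftrightarrow>
    (\<forall>P j p'. valid_profile n m P \<longrightarrow> j < n \<longrightarrow> valid_pref m p' \<longrightarrow>
       (let a = f P j; a' = f (P(j := p')) j in
          weakly_better (P j) a a' \<or>
          (\<exists>b<m. better (P j) (Some b) a' \<and> pos (P j) b < pos p' b)))"

definition item_dist :: "matching pmf \<Rightarrow> nat \<Rightarrow> nat option \<Rightarrow> real" where
  "item_dist D j x = measure_pmf.prob D {M. M j = x}"

definition lex_dominates :: "pref \<Rightarrow> (nat option \<Rightarrow> real) \<Rightarrow> (nat option \<Rightarrow> real) \<Rightarrow> bool" where
  "lex_dominates p d d' \<longleftrightarrow>
     (let L = map Some p @ [None] in
      \<exists>k < length L. (\<forall>l<k. d (L ! l) = d' (L ! l)) \<and> d (L ! k) > d' (L ! k))"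

definition lex_truthful :: "nat \<Rightarrow> nat \<Rightarrow> (profile \<Rightarrow> matching pmf) \<Rightarrow> bool" where
  "lex_truthful n m Mech \<longleftrightarrow>
    (\<forall>P j p'. valid_profile n m P \<longrightarrow> j < n \<longrightarrow> valid_pref m p' \<longrightarrow>
       item_dist (Mech P) j = item_dist (Mech (P(j := p'))) j \<or>
       lex_dominates (P j) (item_dist (Mech P) j) (item_dist (Mech (P(j := p'))) j))"

definition fully_lex_truthfully_implementable ::
  "nat \<Rightarrow> nat \<Rightarrow> (profile \<Rightarrow> matching) \<Rightarrow> bool" where
  "fully_lex_truthfully_implementable n m f \<longleftrightarrow>
    (\<forall>\<epsilon>>0. \<exists>Mech. is_mechanism n m Mech \<and> lex_truthful n m Mech \<and>
       (\<forall>P. valid_profile n m P \<longrightarrow> measure_pmf.prob (Mech P) {f P} \<ge> 1 - \<epsilon>))"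

text \<open>MaxMatch with priority list pr (earlier = higher priority). Within stage r, the
  unmatched items are processed in increasing index order.\<close>
definition mm_item :: "nat list \<Rightarrow> profile \<Rightarrow> nat \<Rightarrow> matching \<Rightarrow> nat \<Rightarrow> matching" where
  "mm_item pr P r M i =
     (if i \<in> ran M then M else
      (case find (\<lambda>j. M j = None \<and> i \<in> set (take r (P j))) pr of
         None \<Rightarrow> M
       | Some j \<Rightarrow> M(j \<mapsto> i)))"

definition mm_stage :: "nat \<Rightarrow> nat list \<Rightarrow> profile \<Rightarrow> matching \<Rightarrow> nat \<Rightarrow> matching" where
  "mm_stage m pr P M r = foldl (mm_item pr P r) M [0..<m]"

definition MaxMatch :: "nat \<Rightarrow> nat list \<Rightarrow> profile \<Rightarrow> matching" where
  "MaxMatch m pr P = foldl (mm_stage m pr P) Map.empty [1..<m+1]"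

end

theory Submission
  imports Defs
begin

text \<open>
  After stage r, MaxMatch has matched agents only to items among their top r choices, and
  the result is maximal for that relation: no unmatched agent still sees a free item in its
  top r. A maximal matching has at least half the size of any matching in the same relation,
  which gives the factor 2.

  For pseudomonotonicity, suppose that agent j obtains its k-th true choice c by misreporting,
  without moving any item ranked above c in the true order further down. Then both reports
  agree on the first k positions, so the first k stages coincide, and a look at stage k + 1
  shows that under the truthful report j is already matched by then, hence obtains c or better.

  A pseudomonotone algorithm is implemented by outputting its matching with weight K and,
  with the remaining weight, giving a single agent its t-th reported choice with weight
  m - t. For K > m, the first item at which an agent's two distributions differ is decided
  either by the algorithm's output or by the noise, and pseudomonotonicity makes both favour
  the truthful report.
\<close>

lemma foldl_invariant:
  assumes "Q x" and "\<And>x y. Q x \<Longrightarrow> y \<in> set ys \<Longrightarrow> Q (f x y)"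
  shows "Q (foldl f x ys)"
  using assms by (induction ys arbitrary: x) auto

lemma ran_mono_map_le: "M \<subseteq>\<^sub>m M' \<Longrightarrow> ran M \<subseteq> ran M'"
  by (force simp: map_le_def ran_def dom_def)

lemma card_ran_le_card_dom:
  assumes "finite (dom M)"
  shows "card (ran M) \<le> card (dom M)"
proof -
  have "ran M = (\<lambda>x. the (M x)) ` dom M"
    by (force simp: ran_def dom_def)
  then show ?thesis
    using card_image_le[OF assms] by simp
qed

lemma valid_pref_length: "valid_pref m p \<Longrightarrow> length p = m"
  using distinct_card[of p] by (simp add: valid_pref_def)

lemma valid_pref_facts: "valid_pref m p \<Longrightarrow> distinct p \<and> set p = {0..<m} \<and> length p = m"
  using valid_pref_length by (simp add: valid_pref_def)

lemma valid_pref_nth_less: "valid_pref m p \<Longrightarrow> k < m \<Longrightarrow> p ! k < m"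
  using valid_pref_length nth_mem unfolding valid_pref_def by fastforce

lemma pos_nth: "distinct p \<Longrightarrow> l < length p \<Longrightarrow> pos p (p ! l) = l"
  unfolding pos_def by (rule Least_equality) (auto simp: nth_eq_iff_index_eq)

lemma nth_pos: "b \<in> set p \<Longrightarrow> pos p b < length p \<and> p ! pos p b = b"
  unfolding pos_def by (rule LeastI_ex) (auto simp: in_set_conv_nth)

lemma pos_less_if_in_take: "b \<in> set (take r p) \<Longrightarrow> pos p b < r"
proof -
  assume "b \<in> set (take r p)"
  then obtain l where "l < r" "l < length p" "p ! l = b"
    by (auto simp: in_set_conv_nth)
  then have "pos p b \<le> l"
    unfolding pos_def by (auto intro: Least_le)
  with \<open>l < r\<close> show ?thesis
    by simp
qed

lemma take_eq_if_pos_le: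
  assumes "distinct p" "set q = set p" "k \<le> length p" "\<And>l. l < k \<Longrightarrow> pos q (p ! l) \<le> l"
  shows "take k q = take k p"
proof -
  have "q ! l = p ! l" if "l < k" for l
    using that
  proof (induction l rule: less_induct)
    case (less l)
    define t where "t = pos q (p ! l)"
    have "p ! l \<in> set q"
      using less.prems assms(2,3) by simp
    then have q_t: "q ! t = p ! l"
      using nth_pos t_def by blast
    have "t = l"
    proof (rule ccontr)
      assume "t \<noteq> l"
      then have "t < l"
        using assms(4)[OF less.prems] t_def by simp
      then have "p ! t = p ! l"
        using less.IH less.prems q_t by simp
      then show False
        using \<open>t < l\<close> less.prems assms(1,3) by (simp add: nth_eq_iff_index_eq)
    qed
    then show ?case
      using q_t by simp
  qed
  moreover have "k \<le> length q"
    using assms(2,3) card_length[of q] distinct_card[OF assms(1)] by simp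
  ultimately show ?thesis
    using assms(3) by (intro nth_equalityI) auto
qed

lemma take_Suc_eqI:
  fixes p q :: "nat list"
  assumes "take k q = take k p" "distinct p" "k < length p" "p ! k \<in> set (take (Suc k) q)"
  shows "take (Suc k) q = take (Suc k) p"
proof -
  have "p ! k \<notin> set (take k q)"
  proof
    assume "p ! k \<in> set (take k q)"
    then have "pos p (p ! k) < k"
      using assms(1) pos_less_if_in_take by simp
    then show False
      using pos_nth assms(2,3) by simp
  qed
  moreover have "k < length q"
  proof (rule ccontr)
    assume "\<not> k < length q"
    then show False
      using assms(4) calculation by (simp add: take_all)
  qed
  ultimately have "q ! k = p ! k"
    using assms(4) by (auto simp: take_Suc_conv_app_nth)
  with \<open>k < length q\<close> show ?thesis
    using assms(1,3) by (simp add: take_Suc_conv_app_nth)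
qed

lemma first_difference:
  fixes p q :: "nat list"
  assumes "distinct p" "distinct q" "set p = set q" "p \<noteq> q"
  obtains t where "t < length p" "\<And>l. l < t \<Longrightarrow> pos q (p ! l) = l" "t < pos q (p ! t)"
proof -
  have len: "length q = length p"
    using distinct_card assms(1-3) by metis
  then have "\<exists>t. t < length p \<and> p ! t \<noteq> q ! t"
    using assms(4) nth_equalityI by metis
  then obtain t where t: "t < length p" "p ! t \<noteq> q ! t"
    and least: "\<forall>l<t. \<not> (l < length p \<and> p ! l \<noteq> q ! l)"
    by (auto simp: exists_least_iff[of "\<lambda>t. t < length p \<and> p ! t \<noteq> q ! t"])
  have below: "p ! l = q ! l" if "l < t" for l
    using least that t(1) by auto
  have pos_below: "pos q (p ! l) = l" if "l < t" for l
    using below[OF that] pos_nth[OF assms(2)] that t(1) len by simp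
  define s where "s = pos q (p ! t)"
  have "p ! t \<in> set q"
    using nth_mem[OF t(1)] assms(3) by simp
  then have s: "s < length p" "q ! s = p ! t"
    using nth_pos len unfolding s_def by metis+
  have "\<not> s < t"
  proof
    assume "s < t"
    then have "p ! s = p ! t"
      using below s(2) by simp
    then show False
      using \<open>s < t\<close> s(1) t(1) assms(1) by (simp add: nth_eq_iff_index_eq)
  qed
  moreover have "s \<noteq> t"
    using s(2) t(2) by auto
  ultimately show ?thesis
    using that t(1) pos_below by (simp add: s_def)
qed

section \<open>The stages of MaxMatch\<close>

lemma mm_item_cases:
  "mm_item pr P r M i = M \<or>
   (\<exists>j. j \<in> set pr \<and> M j = None \<and> i \<in> set (take r (P j)) \<and> i \<notin> ran M
        \<and> mm_item pr P r M i = M(j \<mapsto> i))"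
proof (cases "find (\<lambda>j. M j = None \<and> i \<in> set (take r (P j))) pr")
  case (Some j)
  then have "j \<in> set pr \<and> M j = None \<and> i \<in> set (take r (P j))"
    by (auto simp: find_Some_iff)
  with Some show ?thesis by (auto simp: mm_item_def)
qed (simp add: mm_item_def)

lemma mm_item_takes_item:
  assumes "j \<in> set pr" "M j = None" "i \<in> set (take r (P j))"
  shows "i \<in> ran (mm_item pr P r M i)"
  using assms unfolding mm_item_def by (auto split: option.split simp: find_None_iff ran_def)

lemma mm_item_cong:
  "(\<And>j. take r (P j) = take r (Q j)) \<Longrightarrow> mm_item pr P r = mm_item pr Q r"
  by (intro ext) (simp add: mm_item_def)

lemma map_le_mm_item: "M \<subseteq>\<^sub>m mm_item pr P r M i"
  using mm_item_cases[of pr P r M i] by (auto simp: map_le_def)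

lemma map_le_foldl_mm_item: "M \<subseteq>\<^sub>m foldl (mm_item pr P r) M xs"
  by (rule foldl_invariant[where Q = "\<lambda>M'. M \<subseteq>\<^sub>m M'"]) (auto intro: map_le_trans map_le_mm_item)

lemma map_le_mm_stage: "M \<subseteq>\<^sub>m mm_stage m pr P M r"
  unfolding mm_stage_def by (rule map_le_foldl_mm_item)

lemma mm_stage_takes_item:
  assumes "j \<in> set pr" "mm_stage m pr P M r j = None" "i < m" "i \<in> set (take r (P j))"
  shows "i \<in> ran (mm_stage m pr P M r)"
proof -
  obtain ys zs where "[0..<m] = ys @ i # zs"
    using split_list[of i "[0..<m]"] \<open>i < m\<close> by auto
  then obtain M' where stage: "mm_stage m pr P M r = foldl (mm_item pr P r) (mm_item pr P r M' i) zs"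
    unfolding mm_stage_def by auto
  have "M' \<subseteq>\<^sub>m mm_stage m pr P M r"
    unfolding stage using map_le_foldl_mm_item map_le_mm_item map_le_trans by blast
  then have "M' j = None"
    using assms(2) by (auto simp: map_le_def dom_def)
  then have "i \<in> ran (mm_item pr P r M' i)"
    using assms mm_item_takes_item by metis
  then show ?thesis
    unfolding stage using ran_mono_map_le map_le_foldl_mm_item by blast
qed

definition mm_upto :: "nat \<Rightarrow> nat list \<Rightarrow> profile \<Rightarrow> nat \<Rightarrow> matching" where
  "mm_upto m pr P r = foldl (mm_stage m pr P) Map.empty [1..<r+1]"

lemma mm_upto_0 [simp]: "mm_upto m pr P 0 = Map.empty"
  by (simp add: mm_upto_def)

lemma mm_upto_Suc: "mm_upto m pr P (Suc r) = mm_stage m pr P (mm_upto m pr P r) (Suc r)"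
  by (simp add: mm_upto_def)

lemma MaxMatch_eq_mm_upto: "MaxMatch m pr P = mm_upto m pr P m"
  by (simp add: mm_upto_def MaxMatch_def)

lemma mm_upto_mono: "r \<le> r' \<Longrightarrow> mm_upto m pr P r \<subseteq>\<^sub>m mm_upto m pr P r'"
proof (induction r' rule: dec_induct)
  case (step r')
  then show ?case
    using map_le_mm_stage map_le_trans by (metis mm_upto_Suc)
qed simp

lemma mm_upto_Some_mono: "mm_upto m pr P r j = Some x \<Longrightarrow> r \<le> r' \<Longrightarrow> mm_upto m pr P r' j = Some x"
  using mm_upto_mono by (force simp: map_le_def)

lemma mm_upto_takes_item:
  assumes "j \<in> set pr" "mm_upto m pr P r j = None" "i < m" "i \<in> set (take r (P j))"
  shows "i \<in> ran (mm_upto m pr P r)"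
  using assms mm_stage_takes_item by (cases r) (auto simp: mm_upto_Suc)

lemma mm_upto_invariant:
  "inj_on (mm_upto m pr P r) (dom (mm_upto m pr P r)) \<and>
   (\<forall>j a. mm_upto m pr P r j = Some a \<longrightarrow> j \<in> set pr \<and> a < m \<and> a \<in> set (take r (P j)))"
proof (induction r)
  case (Suc r)
  let ?Q = "\<lambda>M. inj_on M (dom M) \<and>
     (\<forall>j a. M j = Some a \<longrightarrow> j \<in> set pr \<and> a < m \<and> a \<in> set (take (Suc r) (P j)))"
  have "set (take r xs) \<subseteq> set (take (Suc r) xs)" for xs :: "nat list"
    by (simp add: set_take_subset_set_take)
  then have "?Q (mm_upto m pr P r)"
    using Suc.IH by blast
  moreover have "?Q (mm_item pr P (Suc r) M i)" if "?Q M" "i \<in> set [0..<m]" for M i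
    using mm_item_cases[of pr P "Suc r" M i] that by (auto simp: inj_on_def dom_def ran_def split: if_splits)
  ultimately show ?case
    unfolding mm_upto_Suc mm_stage_def by (rule foldl_invariant[where Q = ?Q])
qed simp

lemma mm_upto_inj: "inj_on (mm_upto m pr P r) (dom (mm_upto m pr P r))"
  using mm_upto_invariant by blast

lemma mm_upto_SomeD:
  "mm_upto m pr P r j = Some a \<Longrightarrow> j \<in> set pr \<and> a < m \<and> a \<in> set (take r (P j))"
  using mm_upto_invariant by blast

lemma is_matching_mm_upto: "set pr \<subseteq> {0..<n} \<Longrightarrow> is_matching n m (mm_upto m pr P r)"
  unfolding is_matching_def using mm_upto_inj mm_upto_SomeD by fastforce

lemma mm_upto_cong:
  "(\<And>j. take r (P j) = take r (Q j)) \<Longrightarrow> mm_upto m pr P r = mm_upto m pr Q r"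
proof (induction r)
  case (Suc r)
  have "take r (P j) = take r (Q j)" for j
    using Suc.prems[of j] by (metis min.absorb1 le_SucI order_refl take_take)
  then show ?case
    using Suc mm_item_cong[of "Suc r" P Q] by (simp add: mm_upto_Suc mm_stage_def)
qed simp

lemma mm_upto_Suc_newly_matched:
  assumes "mm_upto m pr P k j = None" "mm_upto m pr P (Suc k) j = Some x"
  shows "x = P j ! k"
proof -
  have x: "j \<in> set pr" "x < m" "x \<in> set (take (Suc k) (P j))"
    using mm_upto_SomeD[OF assms(2)] by auto
  have "x \<notin> set (take k (P j))"
  proof
    assume "x \<in> set (take k (P j))"
    then obtain j' where "mm_upto m pr P k j' = Some x"
      using mm_upto_takes_item[OF x(1) assms(1) x(2)] by (auto simp: ran_def)
    then have "mm_upto m pr P (Suc k) j' = Some x"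
      by (rule mm_upto_Some_mono) simp
    then have "j' = j"
      using assms(2) inj_onD[OF mm_upto_inj[of m pr P "Suc k"], of j' j] by auto
    then show False
      using assms(1) \<open>mm_upto m pr P k j' = Some x\<close> by simp
  qed
  moreover have "k < length (P j)"
  proof (rule ccontr)
    assume "\<not> k < length (P j)"
    then show False
      using x(3) calculation by (simp add: take_all)
  qed
  ultimately show ?thesis
    using x(3) by (simp add: take_Suc_conv_app_nth)
qed

lemma mm_upto_Suc_holder:
  assumes "mm_upto m pr P (Suc k) j = Some c" "c \<notin> ran (mm_upto m pr P k)"
  shows "mm_upto m pr P k j = None \<and> c = P j ! k"
proof -
  have "mm_upto m pr P k j = None"
  proof (cases "mm_upto m pr P k j")
    case (Some y)
    then have "y = c"
      using assms(1) mm_upto_Some_mono[of m pr P k j y "Suc k"] by simp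
    then show ?thesis
      using Some assms(2) ranI by metis
  qed
  then show ?thesis
    using mm_upto_Suc_newly_matched[OF _ assms(1)] by simp
qed

lemma mm_upto_Suc_takes_nth:
  assumes "j \<in> set pr" "mm_upto m pr P k j = None" "k < length (P j)" "P j ! k < m"
  shows "P j ! k \<in> ran (mm_upto m pr P (Suc k))"
proof (cases "mm_upto m pr P (Suc k) j")
  case None
  moreover have "P j ! k \<in> set (take (Suc k) (P j))"
    using assms(3) by (simp add: take_Suc_conv_app_nth)
  ultimately show ?thesis
    using mm_upto_takes_item assms by blast
next
  case (Some x)
  then show ?thesis
    using mm_upto_Suc_newly_matched[OF assms(2)] by (auto intro: ranI)
qed

section \<open>Rank approximation\<close>

lemma rank_le: "rank n i M P \<le> n"
  unfolding rank_def by (rule card_mono[of "{..<n}", simplified]) auto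

lemma card_dom_mm_upto_le_rank:
  assumes "set pr \<subseteq> {0..<n}" and "r \<le> m"
  shows "card (dom (mm_upto m pr P r)) \<le> rank n r (MaxMatch m pr P) P"
  unfolding rank_def
proof (rule card_mono)
  show "dom (mm_upto m pr P r) \<subseteq> {j. j < n \<and> (\<exists>a. MaxMatch m pr P j = Some a \<and> a \<in> set (take r (P j)))}"
  proof
    fix j assume "j \<in> dom (mm_upto m pr P r)"
    then obtain a where a: "mm_upto m pr P r j = Some a"
      by auto
    then have "MaxMatch m pr P j = Some a"
      using mm_upto_Some_mono[OF a \<open>r \<le> m\<close>] by (simp add: MaxMatch_eq_mm_upto)
    then show "j \<in> {j. j < n \<and> (\<exists>a. MaxMatch m pr P j = Some a \<and> a \<in> set (take r (P j)))}"
      using mm_upto_SomeD[OF a] assms(1) by auto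
  qed
qed simp

lemma rank_le_twice_card_dom_mm_upto:
  assumes agents: "set pr = {0..<n}" and M: "is_matching n m M"
  shows "rank n r M P \<le> 2 * card (dom (mm_upto m pr P r))"
proof -
  define S where "S = mm_upto m pr P r"
  define A where "A = {j. j < n \<and> (\<exists>a. M j = Some a \<and> a \<in> set (take r (P j)))}"
  have "dom S \<subseteq> set pr"
    using mm_upto_SomeD by (fastforce simp: S_def)
  then have fin_S: "finite (dom S)"
    using finite_subset by blast
  \<comment> \<open>By maximality of S, the M-partners of the agents of A left unmatched by S are taken in S.\<close>
  have into_ran: "(\<lambda>j. the (M j)) ` (A - dom S) \<subseteq> ran S"
  proof
    fix a assume "a \<in> (\<lambda>j. the (M j)) ` (A - dom S)"
    then obtain j where "j \<in> A" "S j = None" "a = the (M j)"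
      by blast
    then have "j < n" "M j = Some a" "a \<in> set (take r (P j))"
      by (auto simp: A_def)
    moreover have "a < m"
      using M \<open>M j = Some a\<close> by (simp add: is_matching_def)
    ultimately show "a \<in> ran S"
      using \<open>S j = None\<close> mm_upto_takes_item[of j pr m P r a] agents by (simp add: S_def)
  qed
  have "inj_on (\<lambda>j. the (M j)) (A - dom S)"
  proof (rule inj_onI)
    fix x y assume "x \<in> A - dom S" "y \<in> A - dom S" "the (M x) = the (M y)"
    then have "M x = M y" "x \<in> dom M" "y \<in> dom M"
      by (auto simp: A_def)
    then show "x = y"
      using M by (auto simp: is_matching_def dest: inj_onD)
  qed
  then have "card (A - dom S) \<le> card (ran S)"
    using card_inj_on_le finite_ran[OF fin_S] into_ran by blast
  also have "\<dots> \<le> card (dom S)"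
    using card_ran_le_card_dom[OF fin_S] .
  finally have "card (A - dom S) \<le> card (dom S)" .
  moreover have "card A = card (A \<inter> dom S) + card (A - dom S)"
    by (rule card_Int_Diff) (simp add: A_def)
  moreover have "card (A \<inter> dom S) \<le> card (dom S)"
    using fin_S by (simp add: card_mono)
  ultimately show ?thesis
    unfolding rank_def A_def[symmetric] S_def by simp
qed

lemma maxrank_le_twice_rank_MaxMatch:
  assumes agents: "set pr = {0..<n}" and "i \<le> m"
  shows "maxrank n m i P \<le> 2 * rank n i (MaxMatch m pr P) P"
  unfolding maxrank_def
proof (rule Max.boundedI)
  show "finite {rank n i M P |M. is_matching n m M}"
    by (rule finite_subset[of _ "{..n}"]) (auto simp: rank_le)
  show "{rank n i M P |M. is_matching n m M} \<noteq> {}"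
    using is_matching_mm_upto[of pr n m P i] agents by auto
  fix r assume "r \<in> {rank n i M P |M. is_matching n m M}"
  then obtain M where "is_matching n m M" "r = rank n i M P"
    by blast
  then have "r \<le> 2 * card (dom (mm_upto m pr P i))"
    using rank_le_twice_card_dom_mm_upto[OF agents] by blast
  also have "\<dots> \<le> 2 * rank n i (MaxMatch m pr P) P"
    using card_dom_mm_upto_le_rank[OF _ \<open>i \<le> m\<close>] agents by simp
  finally show "r \<le> 2 * rank n i (MaxMatch m pr P) P" .
qed

lemma rank_approx_MaxMatch:
  assumes agents: "set pr = {0..<n}"
  shows "rank_approx n m 2 (\<lambda>P. return_pmf (MaxMatch m pr P))"
  unfolding rank_approx_def
proof (intro conjI allI impI ballI)
  show "is_mechanism n m (\<lambda>P. return_pmf (MaxMatch m pr P))"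
    unfolding is_mechanism_def MaxMatch_eq_mm_upto using is_matching_mm_upto agents by simp
  fix P i assume "i \<in> {1..m}"
  then have "maxrank n m i P \<le> 2 * rank n i (MaxMatch m pr P) P"
    using maxrank_le_twice_rank_MaxMatch[OF agents] by simp
  then show "real (maxrank n m i P) / 2
      \<le> measure_pmf.expectation (return_pmf (MaxMatch m pr P)) (\<lambda>M. real (rank n i M P))"
    by simp
qed

section \<open>Pseudomonotonicity\<close>

lemma mm_upto_Suc_matched_if_deviation_wins:
  assumes agents: "set pr = {0..<n}" and P: "valid_profile n m P" and j: "j < n"
    and k: "k < m" and prefix: "take k p' = take k (P j)"
    and deviation: "MaxMatch m pr (P(j := p')) j = Some (P j ! k)"
  shows "mm_upto m pr P (Suc k) j \<noteq> None"
proof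
  assume unmatched: "mm_upto m pr P (Suc k) j = None"
  define P' where "P' = P(j := p')"
  define c where "c = P j ! k"
  have valid: "valid_pref m (P ag)" if "ag < n" for ag
    using P that by (simp add: valid_profile_def)
  have p: "distinct (P j)" "length (P j) = m"
    using valid_pref_facts[OF valid[OF j]] by auto
  have c: "c < m" "c \<in> set (take (Suc k) (P j))"
    using valid_pref_nth_less[OF valid[OF j] k] k p by (auto simp: c_def take_Suc_conv_app_nth)
  have same_prefix_stages: "mm_upto m pr P' k = mm_upto m pr P k"
    unfolding P'_def using prefix by (intro mm_upto_cong) simp
  have held_by_j: "ag = j" if "mm_upto m pr P' r ag = Some c" "r \<le> m" for r ag
  proof -
    have "mm_upto m pr P' m j = Some c" "mm_upto m pr P' m ag = Some c"
      using deviation mm_upto_Some_mono[OF that] by (simp_all add: MaxMatch_eq_mm_upto P'_def c_def)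
    then show ?thesis
      using inj_onD[OF mm_upto_inj[of m pr P' m], of ag j] by auto
  qed
  \<comment> \<open>c is newly taken at stage k + 1 by some ag, so it is ag's k-th choice; ag's list is
    unchanged by the misreport, so c is again taken by stage k + 1, necessarily by j, and then
    the two reports even agree on k + 1 positions.\<close>
  obtain ag where ag: "mm_upto m pr P (Suc k) ag = Some c"
    using mm_upto_takes_item[OF _ unmatched c] agents j by (auto simp: ran_def)
  have "c \<notin> ran (mm_upto m pr P k)"
  proof
    assume "c \<in> ran (mm_upto m pr P k)"
    then obtain ag' where ag': "mm_upto m pr P k ag' = Some c"
      by (auto simp: ran_def)
    then have "ag' = j"
      using held_by_j[of k ag'] same_prefix_stages k by simp
    then show False
      using ag' unmatched mm_upto_Some_mono[of m pr P k j c "Suc k"] by simp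
  qed
  then have "mm_upto m pr P' k ag = None" "c = P ag ! k"
    using mm_upto_Suc_holder[OF ag] same_prefix_stages by auto
  moreover have "ag < n" "P' ag = P ag"
    using mm_upto_SomeD[OF ag] agents ag unmatched by (auto simp: P'_def)
  ultimately have "c \<in> ran (mm_upto m pr P' (Suc k))"
    using mm_upto_Suc_takes_nth[of ag pr m P' k] agents c(1) valid_pref_length[OF valid] k by auto
  then obtain ag' where ag': "mm_upto m pr P' (Suc k) ag' = Some c"
    by (auto simp: ran_def)
  then have "c \<in> set (take (Suc k) p')"
    using held_by_j[OF ag'] k mm_upto_SomeD[OF ag'] by (simp add: P'_def)
  then have "take (Suc k) p' = take (Suc k) (P j)"
    using take_Suc_eqI[OF prefix] p k by (simp add: c_def)
  then have "mm_upto m pr P' (Suc k) = mm_upto m pr P (Suc k)"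
    by (intro mm_upto_cong) (simp add: P'_def)
  then show False
    using ag' held_by_j[OF ag'] k unmatched by simp
qed

lemma MaxMatch_weakly_better_than_deviation:
  assumes agents: "set pr = {0..<n}" and P: "valid_profile n m P" and j: "j < n"
    and k: "k < m" and prefix: "take k p' = take k (P j)"
    and deviation: "MaxMatch m pr (P(j := p')) j = Some (P j ! k)"
  shows "weakly_better (P j) (MaxMatch m pr P j) (Some (P j ! k))"
proof -
  obtain x where x: "mm_upto m pr P (Suc k) j = Some x"
    using mm_upto_Suc_matched_if_deviation_wins[OF assms] by auto
  have p: "distinct (P j)" "length (P j) = m"
    using P j valid_pref_facts by (auto simp: valid_profile_def)
  have "MaxMatch m pr P j = Some x"
    using mm_upto_Some_mono[OF x] k by (simp add: MaxMatch_eq_mm_upto)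
  moreover have "pos (P j) x < Suc k" "x \<in> set (P j)"
    using mm_upto_SomeD[OF x] pos_less_if_in_take in_set_takeD by fastforce+
  moreover have "pos (P j) (P j ! k) = k"
    using pos_nth p k by simp
  ultimately show ?thesis
    using nth_pos[of x "P j"] by (cases "pos (P j) x = k") (auto simp: weakly_better_def)
qed

lemma pseudomonotone_MaxMatch:
  assumes agents: "set pr = {0..<n}"
  shows "pseudomonotone n m (MaxMatch m pr)"
  unfolding pseudomonotone_def Let_def
proof (intro allI impI disjCI)
  fix P j p'
  assume P: "valid_profile n m P" and j: "j < n" and p': "valid_pref m p'"
    and no_demotion: "\<not> (\<exists>b<m. better (P j) (Some b) (MaxMatch m pr (P(j := p')) j) \<and> pos (P j) b < pos p' b)"
  have p: "valid_pref m (P j)"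
    using P j by (simp add: valid_profile_def)
  show "weakly_better (P j) (MaxMatch m pr P j) (MaxMatch m pr (P(j := p')) j)"
  proof (cases "MaxMatch m pr (P(j := p')) j")
    case None
    then show ?thesis
      by (cases "MaxMatch m pr P j") (auto simp: weakly_better_def)
  next
    case (Some c)
    define k where "k = pos (P j) c"
    have "c \<in> set (P j)"
      using Some mm_upto_SomeD[of m pr "P(j := p')" m j c] p by (simp add: MaxMatch_eq_mm_upto valid_pref_def)
    then have k: "k < m" "P j ! k = c"
      using nth_pos valid_pref_length[OF p] by (auto simp: k_def)
    have "pos p' (P j ! l) \<le> l" if "l < k" for l
    proof -
      have "pos (P j) (P j ! l) = l"
        using pos_nth p valid_pref_length[OF p] that k(1) by (simp add: valid_pref_def)
      moreover have "P j ! l < m"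
        using valid_pref_nth_less[OF p] that k(1) by simp
      moreover have "\<not> (better (P j) (Some (P j ! l)) (Some c) \<and> pos (P j) (P j ! l) < pos p' (P j ! l))"
        using no_demotion \<open>P j ! l < m\<close> unfolding Some by blast
      ultimately show ?thesis
        using that by (simp add: k_def)
    qed
    then have "take k p' = take k (P j)"
      using take_eq_if_pos_le[of "P j" p' k] p p' k valid_pref_length by (auto simp: valid_pref_def)
    then show ?thesis
      using MaxMatch_weakly_better_than_deviation[OF agents P j k(1)] Some k(2) by simp
  qed
qed

section \<open>Lexicographically truthful implementation\<close>

lemma weakly_better_before_first_difference:
  fixes p p' :: "nat list"
  assumes p: "valid_pref m p"
    and pm: "weakly_better p a a' \<or> (\<exists>b<m. better p (Some b) a' \<and> pos p b < pos p' b)"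
    and same_start: "\<And>l. l < t \<Longrightarrow> pos p' (p ! l) = l" and "t < m"
    and a': "a' = Some (p ! l)" and "l \<le> t"
  shows "weakly_better p a a'"
proof (rule ccontr)
  assume "\<not> weakly_better p a a'"
  then obtain b where b: "b < m" "pos p b < l" "pos p b < pos p' b"
    using pm a' pos_nth valid_pref_facts[OF p] \<open>l \<le> t\<close> \<open>t < m\<close> by auto
  then have "p ! pos p b = b" "pos p b < t"
    using nth_pos[of b p] valid_pref_facts[OF p] \<open>l \<le> t\<close> by auto
  then have "pos p' b = pos p b"
    using same_start by metis
  then show False
    using b(3) by simp
qed

lemma first_indicator_difference:
  fixes p :: "nat list" and a a' :: "nat option"
  assumes "distinct p" "d < length p"
    and differ: "(a = Some (p ! d)) \<noteq> (a' = Some (p ! d))"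
    and agree: "\<forall>l<d. (a = Some (p ! l)) = (a' = Some (p ! l))"
    and a: "\<And>e. a = Some e \<Longrightarrow> e \<in> set p"
    and weakly_better: "a' = Some (p ! d) \<Longrightarrow> weakly_better p a a'"
  shows "a = Some (p ! d)"
proof (rule ccontr)
  assume "a \<noteq> Some (p ! d)"
  then have a': "a' = Some (p ! d)" and "a \<noteq> a'"
    using differ by auto
  then have "better p a a'"
    using weakly_better by (simp add: weakly_better_def)
  then obtain e where e: "a = Some e" "pos p e < d"
    using a' pos_nth assms(1,2) by (cases a) auto
  then have "p ! pos p e = e"
    using nth_pos[of e p] a by simp
  then have "p ! pos p e = p ! d"
    using agree[rule_format, OF e(2)] e(1) a' by simp
  then show False
    using e(2) assms(1,2) by (simp add: nth_eq_iff_index_eq)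
qed

lemma lex_greater_counts:
  fixes p p' :: "nat list" and a a' :: "nat option"
  assumes p: "valid_pref m p" and p': "valid_pref m p'" and "p \<noteq> p'" and "m < K"
    and a: "\<And>e. a = Some e \<Longrightarrow> e < m"
    and pm: "weakly_better p a a' \<or> (\<exists>b<m. better p (Some b) a' \<and> pos p b < pos p' b)"
  defines "cnt \<equiv> \<lambda>x. K * (if a = Some x then 1 else 0) + (m - pos p x)"
    and "cnt' \<equiv> \<lambda>x. K * (if a' = Some x then 1 else 0) + (m - pos p' x)"
  shows "\<exists>d<m. (\<forall>l<d. cnt (p ! l) = cnt' (p ! l)) \<and> cnt' (p ! d) < cnt (p ! d)"
proof -
  have p_facts: "distinct p" "set p = {0..<m}" "length p = m"
    and p'_facts: "distinct p'" "set p' = {0..<m}" "length p' = m"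
    using valid_pref_facts[OF p] valid_pref_facts[OF p'] by auto
  have "set p = set p'"
    using p_facts p'_facts by simp
  then obtain t where t: "t < length p" "\<And>l. l < t \<Longrightarrow> pos p' (p ! l) = l" "t < pos p' (p ! t)"
    using first_difference[OF p_facts(1) p'_facts(1) _ \<open>p \<noteq> p'\<close>] by blast
  have "t < m"
    using t(1) p_facts by simp
  have equal_below: "\<forall>l<d. cnt (p ! l) = cnt' (p ! l)"
    if "d \<le> t" "\<forall>l<d. (a = Some (p ! l)) = (a' = Some (p ! l))" for d
    using that t(2) pos_nth p_facts \<open>t < m\<close> unfolding cnt_def cnt'_def by simp
  show ?thesis
  proof (cases "\<forall>l\<le>t. (a = Some (p ! l)) = (a' = Some (p ! l))")
    case True
    \<comment> \<open>Only the noise differs up to position t, and at t it favours the truthful report.\<close>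
    have "m - pos p' (p ! t) < m - pos p (p ! t)"
      using \<open>t < m\<close> t(3) pos_nth p_facts by simp
    then have "cnt' (p ! t) < cnt (p ! t)"
      using True unfolding cnt_def cnt'_def by simp
    then show ?thesis
      using equal_below[of t] True \<open>t < m\<close> by auto
  next
    case False
    \<comment> \<open>The outputs differ first at some d \<le> t, and there the truthful output wins by K > m.\<close>
    define differ where "differ d \<longleftrightarrow> d \<le> t \<and> (a = Some (p ! d)) \<noteq> (a' = Some (p ! d))" for d
    have "\<exists>d. differ d"
      using False by (auto simp: differ_def)
    then obtain d where "differ d" "\<forall>l<d. \<not> differ l"
      using exists_least_iff[of differ] by blast
    then have d: "d \<le> t" "(a = Some (p ! d)) \<noteq> (a' = Some (p ! d))"
      and agree: "\<forall>l<d. (a = Some (p ! l)) = (a' = Some (p ! l))"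
      by (auto simp: differ_def)
    have "a = Some (p ! d)"
      using first_indicator_difference[OF p_facts(1) _ d(2) agree]
        weakly_better_before_first_difference[OF p pm t(2) \<open>t < m\<close> _ d(1)] a p_facts d(1) \<open>t < m\<close>
      by simp
    then have "cnt' (p ! d) < cnt (p ! d)"
      using d(2) \<open>m < K\<close> unfolding cnt_def cnt'_def by simp
    then show ?thesis
      using equal_below[of d] agree d(1) \<open>t < m\<close> by (intro exI[of _ d]) auto
  qed
qed

text \<open>Drawing (j, t, s) gives agent j alone its t-th reported choice; for fixed j and t there are
  m - t such triples, so this noise strictly rewards keeping an item high in the report.\<close>

definition noise_triples :: "nat \<Rightarrow> nat \<Rightarrow> (nat \<times> nat \<times> nat) set" where
  "noise_triples n m = {(j, t, s). j < n \<and> t \<le> s \<and> s < m}"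

definition mixture_support :: "nat \<Rightarrow> nat \<Rightarrow> nat \<Rightarrow> (nat + nat \<times> nat \<times> nat) set" where
  "mixture_support n m K = Inl ` {..<K} \<union> Inr ` noise_triples n m"

definition mixture_outcome ::
  "(profile \<Rightarrow> matching) \<Rightarrow> profile \<Rightarrow> nat + nat \<times> nat \<times> nat \<Rightarrow> matching" where
  "mixture_outcome f P x = (case x of Inl _ \<Rightarrow> f P | Inr (j, t, s) \<Rightarrow> [j \<mapsto> P j ! t])"

definition mixture_mech ::
  "nat \<Rightarrow> nat \<Rightarrow> nat \<Rightarrow> (profile \<Rightarrow> matching) \<Rightarrow> profile \<Rightarrow> matching pmf" where
  "mixture_mech n m K f P = map_pmf (mixture_outcome f P) (pmf_of_set (mixture_support n m K))"

lemma finite_noise_triples: "finite (noise_triples n m)"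
  by (rule finite_subset[of _ "{..<n} \<times> {..<m} \<times> {..<m}"]) (auto simp: noise_triples_def)

lemma finite_mixture_support: "finite (mixture_support n m K)"
  by (simp add: mixture_support_def finite_noise_triples)

lemma card_mixture_support: "card (mixture_support n m K) = K + card (noise_triples n m)"
  unfolding mixture_support_def
  by (subst card_Un_disjoint) (auto simp: finite_noise_triples card_image)

lemma mixture_support_nonempty: "0 < K \<Longrightarrow> mixture_support n m K \<noteq> {}"
  by (auto simp: mixture_support_def)

lemma prob_mixture_mech:
  assumes "0 < K"
  shows "measure_pmf.prob (mixture_mech n m K f P) A
     = real (card (mixture_support n m K \<inter> mixture_outcome f P -` A)) / real (K + card (noise_triples n m))"
  unfolding mixture_mech_def measure_map_pmf
  using measure_pmf_of_set[OF mixture_support_nonempty[OF assms] finite_mixture_support] card_mixture_support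
  by (metis Int_commute)

lemma is_mechanism_mixture_mech:
  assumes "0 < K" and matching: "\<And>P. valid_profile n m P \<Longrightarrow> is_matching n m (f P)"
  shows "is_mechanism n m (mixture_mech n m K f)"
  unfolding is_mechanism_def
proof (intro allI impI subsetI)
  fix P M assume P: "valid_profile n m P" and "M \<in> set_pmf (mixture_mech n m K f P)"
  then obtain x where x: "x \<in> mixture_support n m K" "M = mixture_outcome f P x"
    unfolding mixture_mech_def
    using set_pmf_of_set[OF mixture_support_nonempty[OF \<open>0 < K\<close>] finite_mixture_support] by auto
  show "M \<in> {M. is_matching n m M}"
  proof (cases x)
    case Inl
    then show ?thesis
      using x matching[OF P] by (simp add: mixture_outcome_def)
  next
    case (Inr y)
    then obtain j t s where "x = Inr (j, t, s)" "j < n" "t < m"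
      using x(1) by (cases y) (auto simp: mixture_support_def noise_triples_def)
    moreover have "P j ! t < m"
      using P \<open>j < n\<close> \<open>t < m\<close> valid_pref_nth_less by (simp add: valid_profile_def)
    ultimately show ?thesis
      using x(2) by (auto simp: mixture_outcome_def is_matching_def)
  qed
qed

lemma prob_mixture_mech_f_ge:
  assumes "0 < K"
  shows "real K / real (K + card (noise_triples n m)) \<le> measure_pmf.prob (mixture_mech n m K f P) {f P}"
proof -
  have "Inl ` {..<K} \<subseteq> mixture_support n m K \<inter> mixture_outcome f P -` {f P}"
    by (auto simp: mixture_support_def mixture_outcome_def)
  then have "card (Inl ` {..<K} :: (nat + nat \<times> nat \<times> nat) set)
      \<le> card (mixture_support n m K \<inter> mixture_outcome f P -` {f P})"
    using finite_mixture_support by (intro card_mono) auto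
  then show ?thesis
    unfolding prob_mixture_mech[OF assms] by (intro divide_right_mono) (auto simp: card_image)
qed

lemma item_dist_mixture_mech:
  assumes "0 < K" and P: "valid_profile n m P" and "j < n" and b: "b \<in> set (P j)"
  shows "item_dist (mixture_mech n m K f P) j (Some b)
    = real (K * (if f P j = Some b then 1 else 0) + (m - pos (P j) b)) / real (K + card (noise_triples n m))"
proof -
  have p: "distinct (P j)" "length (P j) = m"
    using P \<open>j < n\<close> valid_pref_facts by (auto simp: valid_profile_def)
  define q where "q = pos (P j) b"
  have q: "q < m" "P j ! q = b"
    using nth_pos[OF b] p by (auto simp: q_def)
  have nth_eq_b: "P j ! t = b \<longleftrightarrow> t = q" if "t < m" for t
    using q p that by (metis nth_eq_iff_index_eq)
  define A :: "(nat + nat \<times> nat \<times> nat) set" where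
    "A = (if f P j = Some b then Inl ` {..<K} else {})"
  define B :: "(nat + nat \<times> nat \<times> nat) set" where
    "B = Inr ` (\<lambda>s. (j, q, s)) ` {q..<m}"
  have "mixture_support n m K \<inter> mixture_outcome f P -` {M. M j = Some b} = A \<union> B"
  proof (rule set_eqI)
    fix x :: "nat + nat \<times> nat \<times> nat"
    show "x \<in> mixture_support n m K \<inter> mixture_outcome f P -` {M. M j = Some b} \<longleftrightarrow> x \<in> A \<union> B"
    proof (cases x)
      case Inl
      then show ?thesis
        by (auto simp: mixture_support_def mixture_outcome_def A_def B_def)
    next
      case (Inr y)
      then obtain j' t s where x: "x = Inr (j', t, s)"
        by (cases y) auto
      have "x \<in> mixture_support n m K \<inter> mixture_outcome f P -` {M. M j = Some b}
          \<longleftrightarrow> j' = j \<and> t \<le> s \<and> s < m \<and> P j ! t = b"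
        using \<open>j < n\<close> by (auto simp: x mixture_support_def noise_triples_def mixture_outcome_def)
      also have "\<dots> \<longleftrightarrow> j' = j \<and> t = q \<and> q \<le> s \<and> s < m"
        using nth_eq_b[of t] by auto
      also have "\<dots> \<longleftrightarrow> x \<in> A \<union> B"
        by (auto simp: x A_def B_def)
      finally show ?thesis .
    qed
  qed
  moreover have "card (A \<union> B) = K * (if f P j = Some b then 1 else 0) + (m - q)"
    by (subst card_Un_disjoint) (auto simp: A_def B_def card_image inj_on_def)
  ultimately show ?thesis
    unfolding item_dist_def prob_mixture_mech[OF \<open>0 < K\<close>] q_def by simp
qed

lemma lex_dominatesI:
  assumes "d < length p" "\<forall>l<d. u (Some (p ! l)) = v (Some (p ! l))" "v (Some (p ! d)) < u (Some (p ! d))"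
  shows "lex_dominates p u v"
  unfolding lex_dominates_def Let_def
  using assms by (intro exI[of _ d]) (auto simp: nth_append)

lemma lex_dominates_mixture_mech:
  assumes "m < K" and pm: "pseudomonotone n m f"
    and matching: "\<And>P. valid_profile n m P \<Longrightarrow> is_matching n m (f P)"
    and P: "valid_profile n m P" and "j < n" and p': "valid_pref m p'" and "P j \<noteq> p'"
  defines "P' \<equiv> P(j := p')"
  shows "lex_dominates (P j) (item_dist (mixture_mech n m K f P) j) (item_dist (mixture_mech n m K f P') j)"
proof -
  have p: "valid_pref m (P j)"
    using P \<open>j < n\<close> by (simp add: valid_profile_def)
  have P': "valid_profile n m P'"
    using P p' by (simp add: P'_def valid_profile_def)
  have a: "e < m" if "f P j = Some e" for e
    using matching[OF P] that by (simp add: is_matching_def)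
  have "weakly_better (P j) (f P j) (f P' j) \<or> (\<exists>b<m. better (P j) (Some b) (f P' j) \<and> pos (P j) b < pos p' b)"
    using pm P \<open>j < n\<close> p' by (simp add: pseudomonotone_def Let_def P'_def)
  then obtain d where d: "d < m"
    "\<forall>l<d. K * (if f P j = Some (P j ! l) then 1 else 0) + (m - pos (P j) (P j ! l))
         = K * (if f P' j = Some (P j ! l) then 1 else 0) + (m - pos p' (P j ! l))"
    "K * (if f P' j = Some (P j ! d) then 1 else 0) + (m - pos p' (P j ! d))
       < K * (if f P j = Some (P j ! d) then 1 else 0) + (m - pos (P j) (P j ! d))"
    using lex_greater_counts[OF p p' \<open>P j \<noteq> p'\<close> \<open>m < K\<close> a] by blast
  define D where "D = real (K + card (noise_triples n m))"
  have "P j ! l \<in> set (P j)" "P j ! l \<in> set (P' j)" if "l < m" for l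
    using that valid_pref_facts[OF p] valid_pref_facts[OF p'] by (auto simp: P'_def)
  then have dist: "item_dist (mixture_mech n m K f P) j (Some (P j ! l))
        = real (K * (if f P j = Some (P j ! l) then 1 else 0) + (m - pos (P j) (P j ! l))) / D"
    and dist': "item_dist (mixture_mech n m K f P') j (Some (P j ! l))
        = real (K * (if f P' j = Some (P j ! l) then 1 else 0) + (m - pos p' (P j ! l))) / D"
    if "l < m" for l
    using item_dist_mixture_mech[of K n m _ j] P P' \<open>j < n\<close> \<open>m < K\<close> that
    by (simp_all add: D_def P'_def)
  have "D > 0"
    using \<open>m < K\<close> by (simp add: D_def)
  show ?thesis
  proof (rule lex_dominatesI)
    show "d < length (P j)"
      using d(1) valid_pref_facts[OF p] by simp
    show "\<forall>l<d. item_dist (mixture_mech n m K f P) j (Some (P j ! l))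
        = item_dist (mixture_mech n m K f P') j (Some (P j ! l))"
    proof (intro allI impI)
      fix l assume "l < d"
      then show "item_dist (mixture_mech n m K f P) j (Some (P j ! l))
          = item_dist (mixture_mech n m K f P') j (Some (P j ! l))"
        using d(1) by (simp only: dist dist' d(2)[rule_format, OF \<open>l < d\<close>] less_trans)
    qed
    show "item_dist (mixture_mech n m K f P') j (Some (P j ! d))
        < item_dist (mixture_mech n m K f P) j (Some (P j ! d))"
      unfolding dist[OF d(1)] dist'[OF d(1)]
      using divide_strict_right_mono[OF of_nat_less_iff[THEN iffD2, OF d(3)] \<open>D > 0\<close>] .
  qed
qed

lemma lex_truthful_mixture_mech:
  assumes "m < K" and "pseudomonotone n m f"
    and "\<And>P. valid_profile n m P \<Longrightarrow> is_matching n m (f P)"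
  shows "lex_truthful n m (mixture_mech n m K f)"
  unfolding lex_truthful_def
proof (intro allI impI)
  fix P j p'
  assume P: "valid_profile n m P" and "j < n" and p': "valid_pref m p'"
  show "item_dist (mixture_mech n m K f P) j = item_dist (mixture_mech n m K f (P(j := p'))) j \<or>
        lex_dominates (P j) (item_dist (mixture_mech n m K f P) j)
          (item_dist (mixture_mech n m K f (P(j := p'))) j)"
  proof (cases "P j = p'")
    case True
    then show ?thesis
      by (metis fun_upd_triv)
  next
    case False
    then show ?thesis
      using lex_dominates_mixture_mech[OF assms P \<open>j < n\<close> p'] by simp
  qed
qed

lemma fully_lex_truthfully_implementable_if_pseudomonotone:
  assumes pm: "pseudomonotone n m f"
    and matching: "\<And>P. valid_profile n m P \<Longrightarrow> is_matching n m (f P)"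
  shows "fully_lex_truthfully_implementable n m f"
  unfolding fully_lex_truthfully_implementable_def
proof (intro allI impI)
  fix \<epsilon> :: real assume "\<epsilon> > 0"
  define N where "N = card (noise_triples n m)"
  define K where "K = nat \<lceil>real N / \<epsilon>\<rceil> + m + 1"
  have "m < K" "0 < K"
    by (simp_all add: K_def)
  have "real N / \<epsilon> \<le> real K"
    unfolding K_def by linarith
  then have "real N \<le> \<epsilon> * real K"
    using \<open>\<epsilon> > 0\<close> by (simp add: field_simps)
  moreover have "0 \<le> \<epsilon> * real N"
    using \<open>\<epsilon> > 0\<close> by simp
  ultimately have "1 - \<epsilon> \<le> real K / real (K + N)"
    using \<open>0 < K\<close> by (simp add: field_simps)
  also have "\<dots> \<le> measure_pmf.prob (mixture_mech n m K f P) {f P}" for P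
    using prob_mixture_mech_f_ge[OF \<open>0 < K\<close>] by (simp add: N_def)
  finally have "1 - \<epsilon> \<le> measure_pmf.prob (mixture_mech n m K f P) {f P}" for P .
  moreover have "is_mechanism n m (mixture_mech n m K f)"
    using is_mechanism_mixture_mech \<open>0 < K\<close> matching by blast
  moreover have "lex_truthful n m (mixture_mech n m K f)"
    using lex_truthful_mixture_mech \<open>m < K\<close> pm matching by blast
  ultimately show "\<exists>Mech. is_mechanism n m Mech \<and> lex_truthful n m Mech \<and>
      (\<forall>P. valid_profile n m P \<longrightarrow> 1 - \<epsilon> \<le> measure_pmf.prob (Mech P) {f P})"
    by blast
qed

theorem theorem6:
  fixes n m :: nat and pr :: "nat list"
  assumes "distinct pr" and "set pr = {0..<n}"
  shows "pseudomonotone n m (MaxMatch m pr)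
         \<and> rank_approx n m 2 (\<lambda>P. return_pmf (MaxMatch m pr P))
         \<and> fully_lex_truthfully_implementable n m (MaxMatch m pr)"
proof (intro conjI)
  show "pseudomonotone n m (MaxMatch m pr)"
    using pseudomonotone_MaxMatch[OF assms(2)] .
  then show "fully_lex_truthfully_implementable n m (MaxMatch m pr)"
    using fully_lex_truthfully_implementable_if_pseudomonotone is_matching_mm_upto assms(2)
    by (simp add: MaxMatch_eq_mm_upto)
qed (rule rank_approx_MaxMatch[OF assms(2)])

end
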